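(* Let $[S,T]$ be a Tamari interval of binary trees with $n$ nodes, and define $u_i$ as the number of nodes in the right subtree of node $i$ in $S$ ($i\in[n]$) and $v_j$ as the number of nodes in the left subtree of node $j$ in $T$ ($j\in[n]$). Then the following are equivalent: (a) for every $i\in[n-1]$, $u_i\neq 0$ or $v_{i+1}\neq 0$; (b) $S$ and $T$ have the same canopy.
   Context: Nodes of a binary tree with $n$ nodes are labeled $1,\dots,n$ in in-order. A right rotation replaces a subtree $((A,x,B),y,C)$ by $(A,x,(B,y,C))$; $S\leq_{\mathrm t}T$ (Tamari order) iff $T$ is obtained from $S$ by a sequence of right rotations, and a Tamari interval is a pair $[S,T]$ with $S\leq_{\mathrm t}T$. For each $i\in[n-1]$, exactly one of the following holds in a binary tree: node $i$ has empty right subtree, or node $i+1$ has empty left subtree; the canopy of the tree is the word $w\in\{R,L\}^{n-1}$ with $w_i=R$ in the first case and $w_i=L$ in the second. The pair $(u,v)$ in the claim is exactly the Tamari interval diagram associated with $[S,T]$ (via the Châtel–Pons interval-poset bijection), and condition (a) is the definition of a synchronized Tamari interval diagram; $[S,T]$ is called synchronized when (b) holds. *)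

theory Defs
  imports Main
begin

text \<open>Unlabelled binary trees; nodes are labelled 1..n implicitly in in-order.\<close>
datatype btree = Leaf | Node btree btree

fun nnodes :: "btree \<Rightarrow> nat" where
  "nnodes Leaf = 0"
| "nnodes (Node l r) = nnodes l + 1 + nnodes r"

inductive right_rot :: "btree \<Rightarrow> btree \<Rightarrow> bool" where
  root: "right_rot (Node (Node A B) C) (Node A (Node B C))"
| left: "right_rot l l' \<Longrightarrow> right_rot (Node l r) (Node l' r)"
| right: "right_rot r r' \<Longrightarrow> right_rot (Node l r) (Node l r')"

definition tamari_le :: "btree \<Rightarrow> btree \<Rightarrow> bool" where
  "tamari_le S T \<longleftrightarrow> right_rot\<^sup>*\<^sup>* S T"

fun right_sizes :: "btree \<Rightarrow> nat list" where
  "right_sizes Leaf = []"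
| "right_sizes (Node l r) = right_sizes l @ [nnodes r] @ right_sizes r"

fun left_sizes :: "btree \<Rightarrow> nat list" where
  "left_sizes Leaf = []"
| "left_sizes (Node l r) = left_sizes l @ [nnodes l] @ left_sizes r"

definition rsub :: "btree \<Rightarrow> nat \<Rightarrow> nat" where
  "rsub t i = right_sizes t ! (i - 1)"

definition lsub :: "btree \<Rightarrow> nat \<Rightarrow> nat" where
  "lsub t i = left_sizes t ! (i - 1)"

datatype canopy_letter = R | L

text \<open>Canopy: w_i = R iff node i has empty right subtree, else (node i+1 has
  empty left subtree) w_i = L, for i = 1..n-1.\<close>
definition canopy :: "btree \<Rightarrow> canopy_letter list" where
  "canopy t = map (\<lambda>i. if rsub t i = 0 then R else L) [1..<nnodes t]"

end

(* A right rotation only enlarges right subtrees, so along a Tamari interval [S,T] an empty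
   right subtree of node i in T forces an empty one in S. Hence the canopies differ exactly when
   some node i has a nonempty right subtree in S but an empty one in T; and in any tree node i+1
   has a nonempty left subtree exactly when node i has an empty right subtree. *)
theory Submission
  imports Defs
begin

lemma length_right_sizes [simp]: "length (right_sizes t) = nnodes t"
  by (induction t) auto

lemma length_left_sizes [simp]: "length (left_sizes t) = nnodes t"
  by (induction t) auto

lemma nnodes_eq_0_iff [simp]: "nnodes t = 0 \<longleftrightarrow> t = Leaf"
  by (cases t) auto

lemma nnodes_pos_iff [simp]: "0 < nnodes t \<longleftrightarrow> t \<noteq> Leaf"
  by (cases t) auto

text \<open>The in-order successor of a node with nonempty right subtree is the leftmost node of that
  subtree; otherwise the node is the rightmost node of its successor's left subtree.\<close>
lemma left_sizes_nonzero_shift: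
  "map (\<lambda>x. x \<noteq> 0) (left_sizes t) @ [True] = (t = Leaf) # map (\<lambda>x. x = 0) (right_sizes t)"
proof (induction t)
  case Leaf
  show ?case by simp
next
  case (Node l r)
  have "map (\<lambda>x. x \<noteq> 0) (left_sizes l) @ [l \<noteq> Leaf] = False # map (\<lambda>x. x = 0) (right_sizes l)"
    using Node.IH(1) by (cases "l = Leaf") auto
  with Node.IH(2) show ?case by simp
qed

lemma lsub_Suc_nonzero_iff_rsub_eq_0:
  assumes "i \<in> {1..<nnodes t}"
  shows "lsub t (i + 1) \<noteq> 0 \<longleftrightarrow> rsub t i = 0"
proof -
  have "(map (\<lambda>x. x \<noteq> 0) (left_sizes t) @ [True]) ! i
      = ((t = Leaf) # map (\<lambda>x. x = 0) (right_sizes t)) ! i"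
    by (simp only: left_sizes_nonzero_shift)
  with assms show ?thesis
    by (auto simp: lsub_def rsub_def nth_append)
qed

lemma right_rot_nnodes: "right_rot S T \<Longrightarrow> nnodes S = nnodes T"
  by (induction rule: right_rot.induct) auto

lemma right_rot_right_sizes_le:
  "right_rot S T \<Longrightarrow> list_all2 (\<le>) (right_sizes S) (right_sizes T)"
  by (induction rule: right_rot.induct)
    (simp_all add: list_all2_appendI list_all2_refl right_rot_nnodes)

lemma tamari_le_right_sizes_le:
  "tamari_le S T \<Longrightarrow> list_all2 (\<le>) (right_sizes S) (right_sizes T)"
  unfolding tamari_le_def
proof (induction rule: rtranclp_induct)
  case base
  show ?case by (simp add: list_all2_refl)
next
  case (step T T')
  show ?case
    using list_all2_trans[OF _ step.IH right_rot_right_sizes_le[OF step.hyps(2)]] by simp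
qed

lemma canopy_eq_iff:
  assumes "nnodes S = nnodes T"
  shows "canopy S = canopy T \<longleftrightarrow> (\<forall>i\<in>{1..<nnodes S}. rsub S i = 0 \<longleftrightarrow> rsub T i = 0)"
  using assms by (auto simp: canopy_def map_eq_conv split: if_splits)

theorem proposition2p5:
  fixes S T :: btree and n :: nat
  assumes "nnodes S = n" and "nnodes T = n"
    and "tamari_le S T"
  shows "(\<forall>i\<in>{1..<n}. rsub S i \<noteq> 0 \<or> lsub T (i + 1) \<noteq> 0)
         \<longleftrightarrow> canopy S = canopy T"
proof -
  have "rsub S i \<le> rsub T i" if "i \<in> {1..<n}" for i
    using tamari_le_right_sizes_le[OF assms(3)] that assms(1)
    by (auto simp: rsub_def list_all2_conv_all_nth)
  moreover have "lsub T (i + 1) \<noteq> 0 \<longleftrightarrow> rsub T i = 0" if "i \<in> {1..<n}" for i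
    using lsub_Suc_nonzero_iff_rsub_eq_0 that assms(2) by blast
  ultimately have "rsub S i \<noteq> 0 \<or> lsub T (i + 1) \<noteq> 0 \<longleftrightarrow> (rsub S i = 0 \<longleftrightarrow> rsub T i = 0)"
    if "i \<in> {1..<n}" for i
    using that by fastforce
  then show ?thesis
    using canopy_eq_iff assms(1,2) by auto
qed

end
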